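(* Suppose Assumption A holds, $x^\star$ is the weak-Minty solution of A(d), and (VrFRBS) uses estimators $\widetilde S^k$ in class (B) with parameter $\tau\in(0,1]$. For constants $\gamma,c_1>0$ define, with the convention $y^{-1}:=x^0$, $$\mathcal Q_k:=\|y^k-x^\star\|^2+(1-\gamma\eta)\|y^k-x^{k-1}\|^2+\tfrac{2\eta}{c_1\tau}\|x^{k-1}-y^{k-1}\|^2+\tfrac{2\eta(1-\tau)}{\tau}\langle e^{k-1},x^\star-y^{k-1}\rangle .$$ Then for all positive $\gamma,c,c_1,c_2$ and all $k\ge0$, almost surely $$\begin{aligned}\mathbb E_k[\mathcal Q_{k+1}]\le{}&\mathcal Q_k-\Big[1-\tfrac{2\eta}{c_1\tau}-\tfrac{4\rho}{\eta}-\tfrac2{c_2}-2L^2\eta\big(c+4\rho+\tfrac1\gamma+\tfrac{2\eta}{c_2}\big)\Big]\|y^k-x^k\|^2\\&-\Big\{1-\gamma\eta-\Big[\tfrac{2\eta}{c_1\tau}+2L^2\eta\big(c+4\rho+\tfrac1\gamma+\tfrac{2\eta}{c_2}\big)\Big]\Big\}\|y^k-x^{k-1}\|^2-cL^2\eta\|x^k-x^{k-1}\|^2+\eta\big(2\eta+\tfrac{c_1}{\tau}+c_2\eta\big)\mathbb E_k\|e^k\|^2,\end{aligned}$$ and moreover, for all $k\ge0$, $$\mathcal Q_k\ge\tfrac34\|y^k-x^\star\|^2+\tfrac{1-2\gamma\eta}{2}\|y^k-x^{k-1}\|^2+\big(\tfrac{2\eta}{c_1\tau}-\tfrac12\big)\|x^{k-1}-y^{k-1}\|^2-\tfrac{8(1-\tau)^2\eta^2}{\tau^2}\|e^{k-1}\|^2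 .$$
   Context: Setting: $G:\mathbb{R}^p\to\mathbb{R}^p$, $T:\mathbb{R}^p\rightrightarrows\mathbb{R}^p$, $\Phi:=G+T$, $\mathrm{zer}\,\Phi:=\{x:0\in Gx+Tx\}$, $J_{\eta T}:=(\mathbb{I}+\eta T)^{-1}$; (E) $Gx=\mathbb{E}_{\zeta\sim\mathbb P}[\mathbf G(x,\zeta)]$ or (F) $Gx=\frac1n\sum_{i=1}^nG_ix$. Assumption A: (a) $\mathrm{zer}\,\Phi\neq\emptyset$; (b) in (E), $\mathbb{E}_\zeta\|\mathbf G(x,\zeta)-Gx\|^2\le\sigma^2$; (c) in (E), $\mathbb{E}_\zeta\|\mathbf G(x,\zeta)-\mathbf G(y,\zeta)\|^2\le L^2\|x-y\|^2$, in (F), $\frac1n\sum_i\|G_ix-G_iy\|^2\le L^2\|x-y\|^2$ (so $G$ is $L$-Lipschitz); (d) there exist $\rho\ge0$ and $x^\star\in\mathrm{zer}\,\Phi$ with $\langle Gx+v,x-x^\star\rangle\ge-\rho\|Gx+v\|^2$ for all $(x,v)\in\mathrm{gra}\,T$. Scheme (VrFRBS): stepsize $\eta>0$, $x^0$, $x^{-2}=x^{-1}=x^0$, $\xi^0\in Tx^0$; for $k\ge0$: $S^k:=2Gx^k-Gx^{k-1}$, estimator $\widetilde S^k$, $x^{k+1}\in J_{\eta T}(x^k-\eta\widetilde S^k)$, $\xi^{k+1}:=\eta^{-1}(x^k-\eta\widetilde S^k-x^{k+1})\in Tx^{k+1}$. Notation: $e^k:=\widetilde S^k-S^k$, $w^k:=Gx^k+\xi^k$,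 $\hat w^k:=Gx^{k-1}+\xi^k$, $y^k:=x^k+\eta\hat w^k$. $\mathcal F_k$: $\sigma$-algebra of all randomness up to iteration $k$ (so $x^j,\xi^j,y^j$, $j\le k$, and $e^{k-1}$ are $\mathcal F_k$-measurable); $\mathbb E_k[\cdot]:=\mathbb E[\cdot\mid\mathcal F_k]$. Class (B): there exist nonnegative random variables $\Delta_k$ ($\Delta_{-1}:=0$), $\tau,\kappa\in(0,1]$, $\Theta,\hat\Theta\ge0$, nonnegative $\{\delta_k\}$ such that with $e^{-1}:=0$, a.s. for all $k\ge0$: $\mathbb E_k[e^k]=(1-\tau)e^{k-1}$; $\mathbb E_k\|e^k\|^2\le\mathbb E_k[\Delta_k]$; $\mathbb E_k[\Delta_k]\le(1-\kappa)\Delta_{k-1}+\Theta\|x^k-x^{k-1}\|^2+\hat\Theta\|x^{k-1}-x^{k-2}\|^2+\delta_k$. *)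

theory Defs
  imports "HOL-Probability.Probability"
begin

text \<open>Vectors in R^p are modelled as real^'n (p = CARD('n)). A set-valued operator
 T : R^p => 2^(R^p) is a function to sets; its graph is {(x,v). v in T x}.\<close>

definition zer :: "(real^'n \<Rightarrow> real^'n) \<Rightarrow> (real^'n \<Rightarrow> (real^'n) set) \<Rightarrow> (real^'n) set" where
  "zer G T = {x. \<exists>v \<in> T x. G x + v = 0}"

definition resolvent :: "real \<Rightarrow> (real^'n \<Rightarrow> (real^'n) set) \<Rightarrow> real^'n \<Rightarrow> (real^'n) set" where
  "resolvent \<eta> T z = {u. \<exists>v \<in> T u. z = u + \<eta> *\<^sub>R v}"

definition weak_minty :: "(real^'n \<Rightarrow> real^'n) \<Rightarrow> (real^'n \<Rightarrow> (real^'n) set) \<Rightarrow> real \<Rightarrow> real^'n \<Rightarrow> bool" where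
  "weak_minty G T \<rho> xs \<longleftrightarrow> \<rho> \<ge> 0 \<and> xs \<in> zer G T \<and>
     (\<forall>x v. v \<in> T x \<longrightarrow> inner (G x + v) (x - xs) \<ge> - \<rho> * (norm (G x + v))\<^sup>2)"

definition assumptionA_E :: "'z measure \<Rightarrow> (real^'n \<Rightarrow> 'z \<Rightarrow> real^'n) \<Rightarrow> (real^'n \<Rightarrow> real^'n)
     \<Rightarrow> real \<Rightarrow> real \<Rightarrow> bool" where
  "assumptionA_E P Gs G \<sigma> L \<longleftrightarrow> prob_space P \<and>
     (\<forall>x. integrable P (Gs x) \<and> G x = (\<integral>\<zeta>. Gs x \<zeta> \<partial>P)) \<and>
     (\<forall>x. (\<integral>\<^sup>+\<zeta>. ennreal ((norm (Gs x \<zeta> - G x))\<^sup>2) \<partial>P) \<le> ennreal (\<sigma>\<^sup>2)) \<and>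
     (\<forall>x y. (\<integral>\<^sup>+\<zeta>. ennreal ((norm (Gs x \<zeta> - Gs y \<zeta>))\<^sup>2) \<partial>P) \<le> ennreal (L\<^sup>2 * (norm (x - y))\<^sup>2))"

definition assumptionA_F :: "nat \<Rightarrow> (nat \<Rightarrow> real^'n \<Rightarrow> real^'n) \<Rightarrow> (real^'n \<Rightarrow> real^'n) \<Rightarrow> real \<Rightarrow> bool" where
  "assumptionA_F n Gi G L \<longleftrightarrow> n \<ge> 1 \<and>
     (\<forall>x. G x = (1 / real n) *\<^sub>R (\<Sum>i = 1..n. Gi i x)) \<and>
     (\<forall>x y. (1 / real n) * (\<Sum>i = 1..n. (norm (Gi i x - Gi i y))\<^sup>2) \<le> L\<^sup>2 * (norm (x - y))\<^sup>2)"

text \<open>Iterates are indexed by nat; since natural subtraction truncates, x (k-1) and x (k-2)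
 at k = 0, 1 realise the convention x^{-2} = x^{-1} = x^0.\<close>

definition Sk :: "(real^'n \<Rightarrow> real^'n) \<Rightarrow> (nat \<Rightarrow> 'w \<Rightarrow> real^'n) \<Rightarrow> nat \<Rightarrow> 'w \<Rightarrow> real^'n" where
  "Sk G x k \<omega> = 2 *\<^sub>R G (x k \<omega>) - G (x (k - 1) \<omega>)"

definition errk :: "(real^'n \<Rightarrow> real^'n) \<Rightarrow> (nat \<Rightarrow> 'w \<Rightarrow> real^'n) \<Rightarrow> (nat \<Rightarrow> 'w \<Rightarrow> real^'n)
     \<Rightarrow> nat \<Rightarrow> 'w \<Rightarrow> real^'n" where
  "errk G x St k \<omega> = St k \<omega> - Sk G x k \<omega>"

definition errprev :: "(real^'n \<Rightarrow> real^'n) \<Rightarrow> (nat \<Rightarrow> 'w \<Rightarrow> real^'n) \<Rightarrow> (nat \<Rightarrow> 'w \<Rightarrow> real^'n)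
     \<Rightarrow> nat \<Rightarrow> 'w \<Rightarrow> real^'n" where
  "errprev G x St k \<omega> = (if k = 0 then 0 else errk G x St (k - 1) \<omega>)"

definition yk :: "(real^'n \<Rightarrow> real^'n) \<Rightarrow> real \<Rightarrow> (nat \<Rightarrow> 'w \<Rightarrow> real^'n) \<Rightarrow> (nat \<Rightarrow> 'w \<Rightarrow> real^'n)
     \<Rightarrow> nat \<Rightarrow> 'w \<Rightarrow> real^'n" where
  "yk G \<eta> x \<xi> k \<omega> = x k \<omega> + \<eta> *\<^sub>R (G (x (k - 1) \<omega>) + \<xi> k \<omega>)"

definition yprev :: "(real^'n \<Rightarrow> real^'n) \<Rightarrow> real \<Rightarrow> (nat \<Rightarrow> 'w \<Rightarrow> real^'n) \<Rightarrow> (nat \<Rightarrow> 'w \<Rightarrow> real^'n)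
     \<Rightarrow> nat \<Rightarrow> 'w \<Rightarrow> real^'n" where
  "yprev G \<eta> x \<xi> k \<omega> = (if k = 0 then x 0 \<omega> else yk G \<eta> x \<xi> (k - 1) \<omega>)"

definition Qk :: "(real^'n \<Rightarrow> real^'n) \<Rightarrow> real \<Rightarrow> real \<Rightarrow> real \<Rightarrow> real \<Rightarrow> real^'n
     \<Rightarrow> (nat \<Rightarrow> 'w \<Rightarrow> real^'n) \<Rightarrow> (nat \<Rightarrow> 'w \<Rightarrow> real^'n) \<Rightarrow> (nat \<Rightarrow> 'w \<Rightarrow> real^'n)
     \<Rightarrow> nat \<Rightarrow> 'w \<Rightarrow> real" where
  "Qk G \<eta> \<tau> \<gamma> c1 xs x \<xi> St k \<omega> =
     (norm (yk G \<eta> x \<xi> k \<omega> - xs))\<^sup>2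
     + (1 - \<gamma> * \<eta>) * (norm (yk G \<eta> x \<xi> k \<omega> - x (k - 1) \<omega>))\<^sup>2
     + (2 * \<eta> / (c1 * \<tau>)) * (norm (x (k - 1) \<omega> - yprev G \<eta> x \<xi> k \<omega>))\<^sup>2
     + (2 * \<eta> * (1 - \<tau>) / \<tau>) * inner (errprev G x St k \<omega>) (xs - yprev G \<eta> x \<xi> k \<omega>)"

text \<open>M: underlying probability space, F: filtration (F k = information up to iteration k).
 The vector conditional expectation E_k[e^k] is taken coordinatewise.\<close>
definition classB :: "'w measure \<Rightarrow> (nat \<Rightarrow> 'w measure) \<Rightarrow> (real^'n \<Rightarrow> real^'n)
     \<Rightarrow> (nat \<Rightarrow> 'w \<Rightarrow> real^'n) \<Rightarrow> (nat \<Rightarrow> 'w \<Rightarrow> real^'n) \<Rightarrow> real \<Rightarrow> bool" where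
  "classB M F G x St \<tau> \<longleftrightarrow> 0 < \<tau> \<and> \<tau> \<le> 1 \<and>
    (\<exists>(\<Delta> :: nat \<Rightarrow> 'w \<Rightarrow> real) (\<kappa>::real) (\<Theta>::real) (\<Theta>h::real) (\<delta> :: nat \<Rightarrow> real).
       0 < \<kappa> \<and> \<kappa> \<le> 1 \<and> \<Theta> \<ge> 0 \<and> \<Theta>h \<ge> 0 \<and> (\<forall>k. \<delta> k \<ge> 0) \<and>
       (\<forall>k. \<Delta> k \<in> borel_measurable M \<and> (\<forall>\<omega> \<in> space M. \<Delta> k \<omega> \<ge> 0)) \<and>
       (\<forall>k. AE \<omega> in M. \<forall>i.
          real_cond_exp M (F k) (\<lambda>\<omega>. errk G x St k \<omega> $ i) \<omega> = (1 - \<tau>) * (errprev G x St k \<omega> $ i)) \<and>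
       (\<forall>k. AE \<omega> in M.
          nn_cond_exp M (F k) (\<lambda>\<omega>. ennreal ((norm (errk G x St k \<omega>))\<^sup>2)) \<omega>
            \<le> nn_cond_exp M (F k) (\<lambda>\<omega>. ennreal (\<Delta> k \<omega>)) \<omega>) \<and>
       (\<forall>k. AE \<omega> in M.
          nn_cond_exp M (F k) (\<lambda>\<omega>. ennreal (\<Delta> k \<omega>)) \<omega>
            \<le> ennreal ((1 - \<kappa>) * (if k = 0 then 0 else \<Delta> (k - 1) \<omega>)
                + \<Theta> * (norm (x k \<omega> - x (k - 1) \<omega>))\<^sup>2
                + \<Theta>h * (norm (x (k - 1) \<omega> - x (k - 2) \<omega>))\<^sup>2 + \<delta> k)))"

end

theory Submission
  imports Defs
begin

(* Writing w^k = G x^k + \<xi>^k \<in> (G + T) x^k, the update gives y^(k+1) = y^k - \<eta> (w^k + e^k).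
   Expanding Q_(k+1) around y^k, the weak Minty inequality controls <w^k, x^k - x*>, the
   Lipschitz continuity of G controls G x^k - G x^(k-1), and Young's inequality absorbs every
   remaining cross term.  This bounds Q_(k+1) pointwise by the claimed right-hand side with
   |e^k|^2 in place of E_k |e^k|^2 and with the extra term (2 \<eta> / \<tau>) <e^k, x* - y^(k-1)>.
   Since y^(k-1) is F_k-measurable and E_k[e^k] = (1 - \<tau>) e^(k-1), conditioning turns that
   term into the last summand of Q_k.  The lower bound on Q_k is a completion of squares. *)

section \<open>Inequalities in real inner product spaces\<close>

lemma norm_add_sq_le:
  fixes a b :: "'a::real_inner"
  shows "(norm (a + b))\<^sup>2 \<le> 2 * (norm a)\<^sup>2 + 2 * (norm b)\<^sup>2"
proof -
  have "(norm (a + b))\<^sup>2 + (norm (a - b))\<^sup>2 = 2 * (norm a)\<^sup>2 + 2 * (norm b)\<^sup>2"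
    unfolding power2_norm_eq_inner
    by (simp add: inner_add_left inner_add_right inner_diff_left inner_diff_right inner_commute)
  then show ?thesis using zero_le_power2[of "norm (a - b)"] by linarith
qed

lemma Young_inner:
  fixes a b :: "'a::real_inner"
  assumes "t > 0"
  shows "2 * inner a b \<le> t * (norm a)\<^sup>2 + (norm b)\<^sup>2 / t"
proof -
  have "0 \<le> (norm (t *\<^sub>R a - b))\<^sup>2 / t" using assms by simp
  also have "\<dots> = t * (norm a)\<^sup>2 - 2 * inner a b + (norm b)\<^sup>2 / t"
    using assms unfolding power2_norm_eq_inner
    by (simp add: inner_diff_left inner_diff_right inner_commute field_simps power2_eq_square)
  finally show ?thesis by simp
qed

lemma norm_add_sq_weighted_le:
  fixes d e :: "'a::real_inner"
  assumes t: "t > 0" and s: "s > 0"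
  shows "(2 - t) * (norm (d + e))\<^sup>2 \<le> (1/t + 2/s) * (norm d)\<^sup>2 + (2 + s/2) * (norm e)\<^sup>2"
proof -
  have "(1/t + 2/s) * (norm d)\<^sup>2 + (2 + s/2) * (norm e)\<^sup>2 - (2 - t) * (norm (d + e))\<^sup>2
     = (norm (d - t *\<^sub>R (d + e)))\<^sup>2 / t + 2/s * (norm (d - (s/2) *\<^sub>R e))\<^sup>2"
    using t s unfolding power2_norm_eq_inner
    by (simp add: inner_add_left inner_add_right inner_diff_left inner_diff_right inner_commute
        field_simps power2_eq_square)
  moreover have "0 \<le> (norm (d - t *\<^sub>R (d + e)))\<^sup>2 / t + 2/s * (norm (d - (s/2) *\<^sub>R e))\<^sup>2"
    using t s by simp
  ultimately show ?thesis by linarith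
qed

lemma Young_inner_three_point:
  fixes e Xp Y Yp :: "'a::real_inner"
  assumes c1: "c1 > 0"
  shows "2 * inner e (Yp - Y) \<le> c1 * (norm e)\<^sup>2 + 2 / c1 * ((norm (Xp - Yp))\<^sup>2 + (norm (Y - Xp))\<^sup>2)"
proof -
  have "(norm (Yp - Y))\<^sup>2 \<le> 2 * (norm (Xp - Yp))\<^sup>2 + 2 * (norm (Y - Xp))\<^sup>2"
    using norm_add_sq_le[of "Yp - Xp" "Xp - Y"] by (simp add: norm_minus_commute)
  then show ?thesis
    using Young_inner[OF c1, of e "Yp - Y"] c1 by (simp add: field_simps)
qed

lemma forward_reflected_step_expansion:
  fixes X Y Yp xs d e :: "'a::real_inner"
  assumes \<tau>: "\<tau> \<noteq> 0"
  shows "(norm (X - \<eta> *\<^sub>R (d + e) - xs))\<^sup>2 + (1 - \<gamma> * \<eta>) * \<eta>\<^sup>2 * (norm (d + e))\<^sup>2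
       + 2 * \<eta> * (1 - \<tau>) / \<tau> * inner e (xs - Y)
     = (norm (Y - xs))\<^sup>2 - 2 * inner ((Y - X) + \<eta> *\<^sub>R d) (X - xs) - (norm (Y - X))\<^sup>2
       + 2 * \<eta> * inner (Y - X) e + (2 - \<gamma> * \<eta>) * \<eta>\<^sup>2 * (norm (d + e))\<^sup>2
       + 2 * \<eta> / \<tau> * inner e (xs - Yp) + 2 * \<eta> / \<tau> * inner e (Yp - Y)"
proof -
  have "(norm (X - \<eta> *\<^sub>R (d + e) - xs))\<^sup>2 = (norm (Y - xs))\<^sup>2 - 2 * inner ((Y - X) + \<eta> *\<^sub>R d) (X - xs)
      - (norm (Y - X))\<^sup>2 + 2 * \<eta> * inner (Y - X) e + \<eta>\<^sup>2 * (norm (d + e))\<^sup>2 + 2 * \<eta> * inner e (xs - Y)"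
    unfolding power2_norm_eq_inner
    by (simp add: inner_add_left inner_add_right inner_diff_left inner_diff_right inner_commute
        algebra_simps power2_eq_square)
  moreover have "2 * \<eta> * (1 - \<tau>) / \<tau> * inner e (xs - Y) + 2 * \<eta> * inner e (xs - Y)
      = 2 * \<eta> / \<tau> * inner e (xs - Yp) + 2 * \<eta> / \<tau> * inner e (Yp - Y)"
    using \<tau> by (simp add: inner_diff_right field_simps)
  moreover have "(1 - \<gamma> * \<eta>) * \<eta>\<^sup>2 * (norm (d + e))\<^sup>2 + \<eta>\<^sup>2 * (norm (d + e))\<^sup>2
      = (2 - \<gamma> * \<eta>) * \<eta>\<^sup>2 * (norm (d + e))\<^sup>2"
    by (simp add: algebra_simps)
  ultimately show ?thesis by linarith
qed

lemma weak_minty_step_bound: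
  fixes X xs u w d :: "'a::real_inner"
  assumes \<eta>: "\<eta> > 0" and \<rho>: "\<rho> \<ge> 0" and w: "\<eta> *\<^sub>R w = u + \<eta> *\<^sub>R d"
    and minty: "inner w (X - xs) \<ge> - \<rho> * (norm w)\<^sup>2"
  shows "- 2 * inner (u + \<eta> *\<^sub>R d) (X - xs) \<le> 4 * \<rho> / \<eta> * (norm u)\<^sup>2 + 4 * \<rho> * \<eta> * (norm d)\<^sup>2"
proof -
  define W where "W = (norm w)\<^sup>2"
  define B where "B = 2 * (norm u)\<^sup>2 + 2 * \<eta>\<^sup>2 * (norm d)\<^sup>2"
  have WB: "\<eta>\<^sup>2 * W \<le> B"
    using norm_add_sq_le[of u "\<eta> *\<^sub>R d"] unfolding W_def B_def w[symmetric]
    by (simp add: power_mult_distrib)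
  have "- 2 * inner (u + \<eta> *\<^sub>R d) (X - xs) = 2 * \<eta> * (- inner w (X - xs))"
    unfolding w[symmetric] by simp
  also have "\<dots> \<le> 2 * \<eta> * (\<rho> * W)"
    using minty \<eta> unfolding W_def by (intro mult_left_mono) auto
  also have "\<dots> = 2 * \<rho> / \<eta> * (\<eta>\<^sup>2 * W)"
    using \<eta> by (simp add: power2_eq_square)
  also have "\<dots> \<le> 2 * \<rho> / \<eta> * B"
    using WB \<eta> \<rho> by (intro mult_left_mono) auto
  also have "\<dots> = 4 * \<rho> / \<eta> * (norm u)\<^sup>2 + 4 * \<rho> * \<eta> * (norm d)\<^sup>2"
    using \<eta> unfolding B_def by (simp add: power2_eq_square field_simps)
  finally show ?thesis .
qed

text \<open>In the application, w is w^k = G x^k + \<xi>^k, d is G x^k - G x^(k-1), e is the estimator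
  error e^k, and the next point is y^(k+1) = y^k - \<eta> (w^k + e^k).\<close>
lemma forward_reflected_step_descent:
  fixes X Xp Y Yp xs w d e :: "'a::real_inner"
  assumes \<eta>: "\<eta> > 0" and \<tau>: "\<tau> > 0" and c1: "c1 > 0" and c2: "c2 > 0" and \<gamma>: "\<gamma> > 0"
    and c: "c > 0" and \<rho>: "\<rho> \<ge> 0"
    and w: "\<eta> *\<^sub>R w = (Y - X) + \<eta> *\<^sub>R d"
    and minty: "inner w (X - xs) \<ge> - \<rho> * (norm w)\<^sup>2"
    and lip: "(norm d)\<^sup>2 \<le> L\<^sup>2 * (norm (X - Xp))\<^sup>2"
  defines "K \<equiv> c + 4 * \<rho> + 1 / \<gamma> + 2 * \<eta> / c2"
  shows "(norm (Y - \<eta> *\<^sub>R (w + e) - xs))\<^sup>2 + (1 - \<gamma> * \<eta>) * (norm (Y - \<eta> *\<^sub>R (w + e) - X))\<^sup>2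
       + 2 * \<eta> / (c1 * \<tau>) * (norm (X - Y))\<^sup>2 + 2 * \<eta> * (1 - \<tau>) / \<tau> * inner e (xs - Y)
     \<le> (norm (Y - xs))\<^sup>2 + (1 - \<gamma> * \<eta>) * (norm (Y - Xp))\<^sup>2 + 2 * \<eta> / (c1 * \<tau>) * (norm (Xp - Yp))\<^sup>2
       - (1 - 2 * \<eta> / (c1 * \<tau>) - 4 * \<rho> / \<eta> - 2 / c2 - 2 * L\<^sup>2 * \<eta> * K) * (norm (Y - X))\<^sup>2
       - (1 - \<gamma> * \<eta> - (2 * \<eta> / (c1 * \<tau>) + 2 * L\<^sup>2 * \<eta> * K)) * (norm (Y - Xp))\<^sup>2
       - c * L\<^sup>2 * \<eta> * (norm (X - Xp))\<^sup>2
       + 2 * \<eta> / \<tau> * inner e (xs - Yp) + \<eta> * (2 * \<eta> + c1 / \<tau> + c2 * \<eta>) * (norm e)\<^sup>2"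
    (is "?lhs \<le> ?rhs")
proof -
  define u where "u = Y - X"
  have "Y - \<eta> *\<^sub>R (w + e) = X - \<eta> *\<^sub>R (d + e)"
    using w by (simp add: scaleR_add_right algebra_simps)
  then have "?lhs = (norm (X - \<eta> *\<^sub>R (d + e) - xs))\<^sup>2 + (1 - \<gamma> * \<eta>) * \<eta>\<^sup>2 * (norm (d + e))\<^sup>2
      + 2 * \<eta> / (c1 * \<tau>) * (norm u)\<^sup>2 + 2 * \<eta> * (1 - \<tau>) / \<tau> * inner e (xs - Y)"
    unfolding u_def by (simp add: norm_minus_commute power_mult_distrib)
  also have "\<dots> = (norm (Y - xs))\<^sup>2 - 2 * inner (u + \<eta> *\<^sub>R d) (X - xs) - (norm u)\<^sup>2
      + 2 * \<eta> * inner u e + (2 - \<gamma> * \<eta>) * \<eta>\<^sup>2 * (norm (d + e))\<^sup>2 + 2 * \<eta> / (c1 * \<tau>) * (norm u)\<^sup>2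
      + 2 * \<eta> / \<tau> * inner e (xs - Yp) + 2 * \<eta> / \<tau> * inner e (Yp - Y)"
    using forward_reflected_step_expansion[of \<tau> X \<eta> d e xs \<gamma> Y Yp] \<tau> unfolding u_def by linarith
  also have "\<dots> \<le> (norm (Y - xs))\<^sup>2 + 4 * \<rho> / \<eta> * (norm u)\<^sup>2 + 4 * \<rho> * \<eta> * (norm d)\<^sup>2
      - (norm u)\<^sup>2 + (2 / c2 * (norm u)\<^sup>2 + c2 * \<eta>\<^sup>2 / 2 * (norm e)\<^sup>2)
      + (\<eta> * (1 / \<gamma> + 2 * \<eta> / c2) * (norm d)\<^sup>2 + (2 + c2 / 2) * \<eta>\<^sup>2 * (norm e)\<^sup>2)
      + 2 * \<eta> / (c1 * \<tau>) * (norm u)\<^sup>2 + 2 * \<eta> / \<tau> * inner e (xs - Yp)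
      + (c1 * \<eta> / \<tau> * (norm e)\<^sup>2 + 2 * \<eta> / (c1 * \<tau>) * ((norm (Xp - Yp))\<^sup>2 + (norm (Y - Xp))\<^sup>2))"
    (is "_ \<le> ?bound")
  proof -
    have "2 * \<eta> * inner u e \<le> 2 / c2 * (norm u)\<^sup>2 + c2 * \<eta>\<^sup>2 / 2 * (norm e)\<^sup>2"
      using Young_inner[of "2 / c2" u "\<eta> *\<^sub>R e"] c2 by (simp add: power_mult_distrib mult_ac)
    moreover have "(2 - \<gamma> * \<eta>) * \<eta>\<^sup>2 * (norm (d + e))\<^sup>2
        \<le> \<eta> * (1 / \<gamma> + 2 * \<eta> / c2) * (norm d)\<^sup>2 + (2 + c2 / 2) * \<eta>\<^sup>2 * (norm e)\<^sup>2"
    proof -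
      have "\<eta> * (1 / \<gamma> + 2 * \<eta> / c2) = \<eta>\<^sup>2 * (1 / (\<gamma> * \<eta>) + 2 / c2)"
        using \<gamma> \<eta> by (simp add: field_simps power2_eq_square)
      then show ?thesis
        using mult_left_mono[OF norm_add_sq_weighted_le[of "\<gamma> * \<eta>" c2 d e], of "\<eta>\<^sup>2"] \<gamma> \<eta> c2
        by (simp add: algebra_simps)
    qed
    moreover have "2 * \<eta> / \<tau> * inner e (Yp - Y)
        \<le> c1 * \<eta> / \<tau> * (norm e)\<^sup>2 + 2 * \<eta> / (c1 * \<tau>) * ((norm (Xp - Yp))\<^sup>2 + (norm (Y - Xp))\<^sup>2)"
      using mult_left_mono[OF Young_inner_three_point[OF c1, of e Yp Y Xp], of "\<eta> / \<tau>"] \<eta> \<tau> c1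
      by (simp add: field_simps)
    ultimately show ?thesis
      using weak_minty_step_bound[OF \<eta> \<rho> w[folded u_def] minty] by linarith
  qed
  also have "\<dots> \<le> ?rhs"
  proof -
    have K: "K \<ge> 0" using c \<rho> \<gamma> \<eta> c2 unfolding K_def by (simp add: add_nonneg_nonneg)
    have "(norm (X - Xp))\<^sup>2 \<le> 2 * (norm u)\<^sup>2 + 2 * (norm (Y - Xp))\<^sup>2"
      using norm_add_sq_le[of "X - Y" "Y - Xp"] unfolding u_def by (simp add: norm_minus_commute)
    then have "0 \<le> \<eta> * L\<^sup>2 * K * (2 * (norm u)\<^sup>2 + 2 * (norm (Y - Xp))\<^sup>2 - (norm (X - Xp))\<^sup>2)"
      using \<eta> K by simp
    moreover have "0 \<le> \<eta> * (4 * \<rho> + 1 / \<gamma> + 2 * \<eta> / c2) * (L\<^sup>2 * (norm (X - Xp))\<^sup>2 - (norm d)\<^sup>2)"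
      using lip \<eta> \<rho> \<gamma> c2 by (simp add: add_nonneg_nonneg)
    moreover have "?rhs - ?bound
        = \<eta> * L\<^sup>2 * K * (2 * (norm u)\<^sup>2 + 2 * (norm (Y - Xp))\<^sup>2 - (norm (X - Xp))\<^sup>2)
          + \<eta> * (4 * \<rho> + 1 / \<gamma> + 2 * \<eta> / c2) * (L\<^sup>2 * (norm (X - Xp))\<^sup>2 - (norm d)\<^sup>2)"
      using \<eta> \<tau> c1 c2 \<gamma> unfolding u_def K_def by (simp add: field_simps power2_eq_square)
    ultimately have "0 \<le> ?rhs - ?bound" by (metis add_nonneg_nonneg)
    then show ?thesis by (simp only: diff_ge_0_iff_ge)
  qed
  finally show ?thesis .
qed

lemma norm_sq_inner_lower_bound:
  fixes Y xs Xp Yp e :: "'a::real_inner"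
  shows "3/4 * (norm (Y - xs))\<^sup>2 + (b - 1/2) * (norm (Y - Xp))\<^sup>2 + (k - 1/2) * (norm (Xp - Yp))\<^sup>2
       - 2 * a\<^sup>2 * (norm e)\<^sup>2
     \<le> (norm (Y - xs))\<^sup>2 + b * (norm (Y - Xp))\<^sup>2 + k * (norm (Xp - Yp))\<^sup>2 + a * inner e (xs - Yp)"
proof -
  have "(norm (Y - xs))\<^sup>2 + b * (norm (Y - Xp))\<^sup>2 + k * (norm (Xp - Yp))\<^sup>2 + a * inner e (xs - Yp)
      - (3/4 * (norm (Y - xs))\<^sup>2 + (b - 1/2) * (norm (Y - Xp))\<^sup>2 + (k - 1/2) * (norm (Xp - Yp))\<^sup>2
         - 2 * a\<^sup>2 * (norm e)\<^sup>2)
     = 1/4 * (norm ((Y - xs) - (2 * a) *\<^sub>R e))\<^sup>2 + 1/2 * (norm ((Y - Xp) + a *\<^sub>R e))\<^sup>2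
       + 1/2 * (norm ((Xp - Yp) + a *\<^sub>R e))\<^sup>2"
    unfolding power2_norm_eq_inner
    by (simp add: inner_add_left inner_add_right inner_diff_left inner_diff_right inner_commute
        algebra_simps power2_eq_square) (simp add: field_simps)
  moreover have "0 \<le> 1/4 * (norm ((Y - xs) - (2 * a) *\<^sub>R e))\<^sup>2 + 1/2 * (norm ((Y - Xp) + a *\<^sub>R e))\<^sup>2
       + 1/2 * (norm ((Xp - Yp) + a *\<^sub>R e))\<^sup>2"
    by simp
  ultimately show ?thesis by linarith
qed

section \<open>Square-integrable random vectors\<close>

definition square_integrable :: "'a measure \<Rightarrow> ('a \<Rightarrow> 'b::real_normed_vector) \<Rightarrow> bool" where
  "square_integrable M f \<longleftrightarrow> f \<in> borel_measurable M \<and> integrable M (\<lambda>\<omega>. (norm (f \<omega>))\<^sup>2)"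

lemma square_integrable_dominated:
  fixes f :: "'a \<Rightarrow> 'b::real_normed_vector"
  assumes "f \<in> borel_measurable M" "integrable M h"
    and "\<And>\<omega>. \<omega> \<in> space M \<Longrightarrow> (norm (f \<omega>))\<^sup>2 \<le> h \<omega>"
  shows "square_integrable M f"
  unfolding square_integrable_def
proof
  have "AE \<omega> in M. norm ((norm (f \<omega>))\<^sup>2) \<le> norm (h \<omega>)"
    using assms(3) by (intro AE_I2) (simp add: order_trans[OF _ abs_ge_self])
  then show "integrable M (\<lambda>\<omega>. (norm (f \<omega>))\<^sup>2)"
    using assms(1) by (intro Bochner_Integration.integrable_bound[OF assms(2)]) measurable
qed (rule assms(1))

lemma square_integrable_measurable:
  "square_integrable M f \<Longrightarrow> f \<in> borel_measurable M"
  by (simp add: square_integrable_def)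

lemma integrable_norm_sq:
  "square_integrable M f \<Longrightarrow> integrable M (\<lambda>\<omega>. (norm (f \<omega>))\<^sup>2)"
  by (simp add: square_integrable_def)

lemma square_integrable_add:
  fixes f g :: "'a \<Rightarrow> 'b::{real_inner, second_countable_topology}"
  assumes "square_integrable M f" "square_integrable M g"
  shows "square_integrable M (\<lambda>\<omega>. f \<omega> + g \<omega>)"
proof (rule square_integrable_dominated)
  show "(\<lambda>\<omega>. f \<omega> + g \<omega>) \<in> borel_measurable M"
    using assms by (intro borel_measurable_add square_integrable_measurable)
  show "integrable M (\<lambda>\<omega>. 2 * (norm (f \<omega>))\<^sup>2 + 2 * (norm (g \<omega>))\<^sup>2)"
    using assms by (intro Bochner_Integration.integrable_add integrable_mult_right integrable_norm_sq)
qed (rule norm_add_sq_le)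

lemma square_integrable_scaleR:
  fixes f :: "'a \<Rightarrow> 'b::{real_inner, second_countable_topology}"
  assumes "square_integrable M f"
  shows "square_integrable M (\<lambda>\<omega>. c *\<^sub>R f \<omega>)"
  using assms by (auto simp: square_integrable_def power_mult_distrib)

lemma square_integrable_diff:
  fixes f g :: "'a \<Rightarrow> 'b::{real_inner, second_countable_topology}"
  assumes "square_integrable M f" "square_integrable M g"
  shows "square_integrable M (\<lambda>\<omega>. f \<omega> - g \<omega>)"
  using square_integrable_add[OF assms(1) square_integrable_scaleR[OF assms(2), of "-1"]] by simp

lemma (in finite_measure) square_integrable_const:
  fixes a :: "'b::{real_inner, second_countable_topology}"
  shows "square_integrable M (\<lambda>\<omega>. a)"
  by (simp add: square_integrable_def)

lemma (in finite_measure) square_integrable_Lipschitz_comp: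
  fixes f :: "'a \<Rightarrow> 'b::{real_inner, second_countable_topology}"
    and G :: "'b \<Rightarrow> 'c::{real_inner, second_countable_topology}"
  assumes "square_integrable M f" "G \<in> borel_measurable borel"
    and lip: "\<And>a b. (norm (G a - G b))\<^sup>2 \<le> L\<^sup>2 * (norm (a - b))\<^sup>2"
  shows "square_integrable M (\<lambda>\<omega>. G (f \<omega>))"
proof (rule square_integrable_dominated)
  show "(\<lambda>\<omega>. G (f \<omega>)) \<in> borel_measurable M"
    by (rule measurable_compose[OF square_integrable_measurable[OF assms(1)] assms(2)])
  show "integrable M (\<lambda>\<omega>. 2 * (norm (G 0))\<^sup>2 + 2 * (L\<^sup>2 * (norm (f \<omega>))\<^sup>2))"
    using integrable_norm_sq[OF assms(1)] by simp
  fix \<omega>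
  have "(norm (G (f \<omega>)))\<^sup>2 \<le> 2 * (norm (G 0))\<^sup>2 + 2 * (norm (G (f \<omega>) - G 0))\<^sup>2"
    using norm_add_sq_le[of "G 0" "G (f \<omega>) - G 0"] by simp
  then show "(norm (G (f \<omega>)))\<^sup>2 \<le> 2 * (norm (G 0))\<^sup>2 + 2 * (L\<^sup>2 * (norm (f \<omega>))\<^sup>2)"
    using lip[of "f \<omega>" 0] by simp
qed

lemma borel_measurable_vec_nth [measurable (raw)]:
  fixes f :: "'a \<Rightarrow> real^'n"
  shows "f \<in> borel_measurable M \<Longrightarrow> (\<lambda>\<omega>. f \<omega> $ i) \<in> borel_measurable M"
  by (rule borel_measurable_continuous_on[OF linear_continuous_on[OF bounded_linear_vec_nth]])

lemma square_integrable_vec_nth: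
  fixes f :: "'a \<Rightarrow> real^'n"
  assumes "square_integrable M f"
  shows "square_integrable M (\<lambda>\<omega>. f \<omega> $ i)"
proof (rule square_integrable_dominated)
  show "(\<lambda>\<omega>. f \<omega> $ i) \<in> borel_measurable M"
    using assms by (intro borel_measurable_vec_nth square_integrable_measurable)
  show "integrable M (\<lambda>\<omega>. (norm (f \<omega>))\<^sup>2)"
    using assms unfolding square_integrable_def by simp
  show "(norm (f \<omega> $ i))\<^sup>2 \<le> (norm (f \<omega>))\<^sup>2" for \<omega>
    using power_mono[OF component_le_norm_cart abs_ge_zero, of "f \<omega>" i 2] by simp
qed

lemma integrable_inner_square_integrable:
  fixes f g :: "'a \<Rightarrow> 'b::{real_inner, second_countable_topology}"
  assumes "square_integrable M f" "square_integrable M g"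
  shows "integrable M (\<lambda>\<omega>. inner (f \<omega>) (g \<omega>))"
proof (rule Bochner_Integration.integrable_bound)
  show "integrable M (\<lambda>\<omega>. (norm (f \<omega>))\<^sup>2 + (norm (g \<omega>))\<^sup>2)"
    using assms unfolding square_integrable_def by simp
  show "(\<lambda>\<omega>. inner (f \<omega>) (g \<omega>)) \<in> borel_measurable M"
    using assms by (intro borel_measurable_inner square_integrable_measurable)
  have "\<bar>inner a b\<bar> \<le> (norm a)\<^sup>2 + (norm b)\<^sup>2" for a b :: 'b
  proof -
    have "\<bar>inner a b\<bar> \<le> norm a * norm b" by (rule Cauchy_Schwarz_ineq2)
    also have "\<dots> \<le> (norm a)\<^sup>2 + (norm b)\<^sup>2"
      using zero_le_power2[of "norm a - norm b"] mult_nonneg_nonneg[OF norm_ge_zero norm_ge_zero, of a b]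
      unfolding power2_diff by linarith
    finally show ?thesis .
  qed
  then show "AE \<omega> in M. norm (inner (f \<omega>) (g \<omega>)) \<le> norm ((norm (f \<omega>))\<^sup>2 + (norm (g \<omega>))\<^sup>2)"
    by simp
qed

context sigma_finite_subalgebra
begin

lemma real_cond_exp_le_measurable_add:
  assumes "\<And>\<omega>. \<omega> \<in> space M \<Longrightarrow> f \<omega> \<le> g \<omega> + h \<omega>"
    and "integrable M f" "integrable M g" "integrable M h" "g \<in> borel_measurable F"
  shows "AE \<omega> in M. real_cond_exp M F f \<omega> \<le> g \<omega> + real_cond_exp M F h \<omega>"
proof -
  have "AE \<omega> in M. real_cond_exp M F f \<omega> \<le> real_cond_exp M F (\<lambda>\<omega>. g \<omega> + h \<omega>) \<omega>"
    using assms by (intro real_cond_exp_mono AE_I2) (auto intro: Bochner_Integration.integrable_add)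
  moreover have "AE \<omega> in M. real_cond_exp M F (\<lambda>\<omega>. g \<omega> + h \<omega>) \<omega>
      = real_cond_exp M F g \<omega> + real_cond_exp M F h \<omega>"
    using assms(3,4) by (rule real_cond_exp_add)
  moreover have "AE \<omega> in M. real_cond_exp M F g \<omega> = g \<omega>"
    using assms(3,5) by (rule real_cond_exp_F_meas)
  ultimately show ?thesis by eventually_elim simp
qed

lemma real_cond_exp_inner_measurable_right:
  fixes f g h :: "'a \<Rightarrow> real^'n"
  assumes "square_integrable M f" "square_integrable M g" "g \<in> borel_measurable F"
    and cond_f: "AE \<omega> in M. \<forall>i. real_cond_exp M F (\<lambda>\<omega>. f \<omega> $ i) \<omega> = h \<omega> $ i"
  shows "AE \<omega> in M. real_cond_exp M F (\<lambda>\<omega>. inner (f \<omega>) (g \<omega>)) \<omega> = inner (h \<omega>) (g \<omega>)"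
proof -
  have int: "integrable M (\<lambda>\<omega>. g \<omega> $ i * f \<omega> $ i)" for i
    using integrable_inner_square_integrable[OF square_integrable_vec_nth square_integrable_vec_nth,
        OF assms(2,1)] by simp
  have inner_sum: "(\<lambda>\<omega>. inner (f \<omega>) (g \<omega>)) = (\<lambda>\<omega>. \<Sum>i\<in>UNIV. g \<omega> $ i * f \<omega> $ i)"
    by (simp add: inner_vec_def mult.commute)
  have "AE \<omega> in M. real_cond_exp M F (\<lambda>\<omega>. inner (f \<omega>) (g \<omega>)) \<omega>
      = (\<Sum>i\<in>UNIV. real_cond_exp M F (\<lambda>\<omega>. g \<omega> $ i * f \<omega> $ i) \<omega>)"
    unfolding inner_sum by (rule real_cond_exp_sum[OF int])
  moreover have "AE \<omega> in M. \<forall>i. real_cond_exp M F (\<lambda>\<omega>. g \<omega> $ i * f \<omega> $ i) \<omega>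
      = g \<omega> $ i * real_cond_exp M F (\<lambda>\<omega>. f \<omega> $ i) \<omega>"
    unfolding AE_all_countable
    by (intro allI real_cond_exp_mult int borel_measurable_vec_nth square_integrable_measurable assms(1,3))
  ultimately show ?thesis
    using cond_f
  proof eventually_elim
    case (elim \<omega>)
    then show ?case by (simp add: inner_vec_def mult.commute)
  qed
qed

end

lemma assumptionA_E_Lipschitz:
  assumes "assumptionA_E P Gs G \<sigma> L"
  shows "(norm (G a - G b))\<^sup>2 \<le> L\<^sup>2 * (norm (a - b))\<^sup>2"
proof -
  have P: "prob_space P" and int: "\<And>x. integrable P (Gs x)" and G: "\<And>x. G x = (\<integral>\<zeta>. Gs x \<zeta> \<partial>P)"
    and bound: "(\<integral>\<^sup>+\<zeta>. ennreal ((norm (Gs a \<zeta> - Gs b \<zeta>))\<^sup>2) \<partial>P) \<le> ennreal (L\<^sup>2 * (norm (a - b))\<^sup>2)"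
    using assms unfolding assumptionA_E_def by auto
  interpret prob_space P by (rule P)
  define D where "D \<zeta> = norm (Gs a \<zeta> - Gs b \<zeta>)" for \<zeta>
  have int_D: "integrable P D"
    unfolding D_def using int by simp
  have "(\<integral>\<^sup>+\<zeta>. ennreal ((D \<zeta>)\<^sup>2) \<partial>P) < \<infinity>"
    using bound unfolding D_def by (simp add: le_less_trans)
  then have int_D2: "integrable P (\<lambda>\<zeta>. (D \<zeta>)\<^sup>2)"
    using int_D by (intro integrableI_bounded) auto
  have "ennreal (expectation (\<lambda>\<zeta>. (D \<zeta>)\<^sup>2)) = (\<integral>\<^sup>+\<zeta>. ennreal ((D \<zeta>)\<^sup>2) \<partial>P)"
    using int_D2 by (intro nn_integral_eq_integral[symmetric]) auto
  then have second_moment: "expectation (\<lambda>\<zeta>. (D \<zeta>)\<^sup>2) \<le> L\<^sup>2 * (norm (a - b))\<^sup>2"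
    using bound unfolding D_def by (simp add: ennreal_le_iff[symmetric])
  have "norm (G a - G b) \<le> expectation D"
    unfolding G D_def using int by (simp flip: Bochner_Integration.integral_diff)
  then have "(norm (G a - G b))\<^sup>2 \<le> (expectation D)\<^sup>2"
    by (simp add: power_mono)
  also have "\<dots> \<le> expectation (\<lambda>\<zeta>. (D \<zeta>)\<^sup>2)"
    using variance_eq[OF int_D int_D2] variance_positive[of D] by simp
  finally show ?thesis using second_moment by linarith
qed

lemma assumptionA_F_Lipschitz:
  assumes "assumptionA_F n Gi G L"
  shows "(norm (G a - G b))\<^sup>2 \<le> L\<^sup>2 * (norm (a - b))\<^sup>2"
proof -
  have n: "n \<ge> 1" and G: "\<And>x. G x = (1 / real n) *\<^sub>R (\<Sum>i = 1..n. Gi i x)"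
    and bound: "(1 / real n) * (\<Sum>i = 1..n. (norm (Gi i a - Gi i b))\<^sup>2) \<le> L\<^sup>2 * (norm (a - b))\<^sup>2"
    using assms unfolding assumptionA_F_def by auto
  define D where "D i = norm (Gi i a - Gi i b)" for i
  have "norm (G a - G b) = (1 / real n) * norm (\<Sum>i = 1..n. Gi i a - Gi i b)"
    by (simp add: G sum_subtractf flip: scaleR_diff_right)
  also have "\<dots> \<le> (1 / real n) * (\<Sum>i = 1..n. D i)"
    unfolding D_def by (intro mult_left_mono norm_sum) simp
  finally have "(norm (G a - G b))\<^sup>2 \<le> (1 / real n)\<^sup>2 * (\<Sum>i = 1..n. D i)\<^sup>2"
    by (simp add: power_mono flip: power_mult_distrib)
  also have "\<dots> \<le> (1 / real n)\<^sup>2 * ((\<Sum>i = 1..n. (D i)\<^sup>2) * real n)"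
    using Cauchy_Schwarz_ineq_sum[of D "\<lambda>_. 1" "{1..n}"] by (intro mult_left_mono) simp_all
  also have "\<dots> = (1 / real n) * (\<Sum>i = 1..n. (D i)\<^sup>2)"
    using n by (simp add: power2_eq_square)
  finally show ?thesis using bound unfolding D_def by linarith
qed

lemma resolvent_residual_mem:
  assumes "u \<in> resolvent \<eta> T z" "\<eta> \<noteq> 0"
  shows "(1 / \<eta>) *\<^sub>R (z - u) \<in> T u"
  using assms unfolding resolvent_def by auto

lemma Qk_lower_bound:
  "Qk G \<eta> \<tau> \<gamma> c1 xs x \<xi> St k \<omega>
   \<ge> 3 / 4 * (norm (yk G \<eta> x \<xi> k \<omega> - xs))\<^sup>2
     + (1 - 2 * \<gamma> * \<eta>) / 2 * (norm (yk G \<eta> x \<xi> k \<omega> - x (k - 1) \<omega>))\<^sup>2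
     + (2 * \<eta> / (c1 * \<tau>) - 1 / 2) * (norm (x (k - 1) \<omega> - yprev G \<eta> x \<xi> k \<omega>))\<^sup>2
     - 8 * (1 - \<tau>)\<^sup>2 * \<eta>\<^sup>2 / \<tau>\<^sup>2 * (norm (errprev G x St k \<omega>))\<^sup>2"
proof -
  have "8 * (1 - \<tau>)\<^sup>2 * \<eta>\<^sup>2 / \<tau>\<^sup>2 = 2 * (2 * \<eta> * (1 - \<tau>) / \<tau>)\<^sup>2"
    by (simp add: power_divide power_mult_distrib)
  moreover have "(1 - 2 * \<gamma> * \<eta>) / 2 = (1 - \<gamma> * \<eta>) - 1 / 2"
    by simp
  ultimately show ?thesis
    unfolding Qk_def by (simp only:) (rule norm_sq_inner_lower_bound)
qed

locale VrFRBS = prob_space M for M :: "'w measure" +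
  fixes G :: "real^'n \<Rightarrow> real^'n" and T :: "real^'n \<Rightarrow> (real^'n) set"
    and L \<rho> \<eta> \<tau> \<gamma> c c1 c2 :: real and xs :: "real^'n"
    and F :: "nat \<Rightarrow> 'w measure" and x \<xi> St :: "nat \<Rightarrow> 'w \<Rightarrow> real^'n"
  assumes G_Lipschitz: "\<And>a b. (norm (G a - G b))\<^sup>2 \<le> L\<^sup>2 * (norm (a - b))\<^sup>2"
    and weak_minty: "weak_minty G T \<rho> xs"
    and filtration: "filtration (space M) F" and subalgebra: "\<And>k. subalgebra M (F k)"
    and step_pos: "\<eta> > 0" and tau_pos: "\<tau> > 0"
    and constants_pos: "\<gamma> > 0" "c > 0" "c1 > 0" "c2 > 0"
    and xi_in_T: "\<And>k \<omega>. \<omega> \<in> space M \<Longrightarrow> \<xi> k \<omega> \<in> T (x k \<omega>)"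
    and xi_Suc: "\<And>k \<omega>. \<omega> \<in> space M \<Longrightarrow>
                   \<xi> (Suc k) \<omega> = (1 / \<eta>) *\<^sub>R (x k \<omega> - \<eta> *\<^sub>R St k \<omega> - x (Suc k) \<omega>)"
    and adapted_x: "\<And>k. x k \<in> borel_measurable (F k)"
    and adapted_xi: "\<And>k. \<xi> k \<in> borel_measurable (F k)"
    and measurable_St: "\<And>k. St k \<in> borel_measurable M"
    and integrable_x: "\<And>k. integrable M (\<lambda>\<omega>. (norm (x k \<omega>))\<^sup>2)"
    and integrable_xi: "\<And>k. integrable M (\<lambda>\<omega>. (norm (\<xi> k \<omega>))\<^sup>2)"
    and integrable_St: "\<And>k. integrable M (\<lambda>\<omega>. (norm (St k \<omega>))\<^sup>2)"
    and error_cond_exp: "\<And>k. AE \<omega> in M. \<forall>i.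
          real_cond_exp M (F k) (\<lambda>\<omega>. errk G x St k \<omega> $ i) \<omega> = (1 - \<tau>) * (errprev G x St k \<omega> $ i)"
begin

lemma measurable_F_mono:
  assumes "f \<in> measurable (F j) N" "j \<le> k"
  shows "f \<in> measurable (F k) N"
proof -
  have "subalgebra (F k) (F j)"
    using filtration.sets_F_mono[OF filtration assms(2)] filtration.space_F[OF filtration]
    unfolding subalgebra_def by simp
  then show ?thesis
    using measurable_from_subalg assms(1) by blast
qed

lemma measurable_iterates_le:
  assumes "j \<le> k"
  shows "x j \<in> borel_measurable (F k)" "\<xi> j \<in> borel_measurable (F k)"
  using measurable_F_mono[OF adapted_x assms] measurable_F_mono[OF adapted_xi assms] .

lemma measurable_iterates [measurable]:
  "x k \<in> borel_measurable M" "\<xi> k \<in> borel_measurable M"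
  using measurable_from_subalg[OF subalgebra] adapted_x adapted_xi by blast+

lemma G_measurable [measurable]: "G \<in> borel_measurable borel"
proof -
  have "norm (G a - G b) \<le> \<bar>L\<bar> * norm (a - b)" for a b
  proof (rule power2_le_imp_le)
    show "(norm (G a - G b))\<^sup>2 \<le> (\<bar>L\<bar> * norm (a - b))\<^sup>2"
      using G_Lipschitz[of a b] by (simp add: power_mult_distrib)
  qed simp
  then have "continuous_on UNIV G"
    by (intro lipschitz_on_continuous_on[of "\<bar>L\<bar>"]) (auto simp: lipschitz_on_def dist_norm)
  then show ?thesis
    by (rule borel_measurable_continuous_onI)
qed

lemma square_integrable_iterates:
  shows "square_integrable M (x k)" "square_integrable M (\<xi> k)"
    and "square_integrable M (yk G \<eta> x \<xi> k)" "square_integrable M (yprev G \<eta> x \<xi> k)"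
    and "square_integrable M (errk G x St k)" "square_integrable M (errprev G x St k)"
proof -
  have x: "square_integrable M (x j)" and \<xi>: "square_integrable M (\<xi> j)"
    and St: "square_integrable M (St j)" for j
    using integrable_x integrable_xi integrable_St measurable_iterates measurable_St
    by (simp_all add: square_integrable_def)
  have Gx: "square_integrable M (\<lambda>\<omega>. G (x j \<omega>))" for j
    by (rule square_integrable_Lipschitz_comp[OF x G_measurable G_Lipschitz])
  have y: "square_integrable M (yk G \<eta> x \<xi> j)" for j
    unfolding yk_def[abs_def] by (intro square_integrable_add square_integrable_scaleR x \<xi> Gx)
  have e: "square_integrable M (errk G x St j)" for j
    unfolding errk_def[abs_def] Sk_def
    by (intro square_integrable_diff square_integrable_scaleR St Gx)
  show "square_integrable M (x k)" "square_integrable M (\<xi> k)" "square_integrable M (yk G \<eta> x \<xi> k)"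
    "square_integrable M (errk G x St k)"
    by (fact x \<xi> y e)+
  show "square_integrable M (yprev G \<eta> x \<xi> k)"
    unfolding yprev_def[abs_def] by (cases "k = 0") (simp_all add: x y)
  show "square_integrable M (errprev G x St k)"
    unfolding errprev_def[abs_def] by (cases "k = 0") (simp_all add: e square_integrable_const)
qed

lemma integrable_Qk: "integrable M (Qk G \<eta> \<tau> \<gamma> c1 xs x \<xi> St k)"
  unfolding Qk_def[abs_def]
  by (intro Bochner_Integration.integrable_add integrable_mult_right integrable_norm_sq
      integrable_inner_square_integrable square_integrable_diff square_integrable_iterates
      square_integrable_const)

text \<open>The estimator error of the previous step is known at time k, because the update rule
  recovers St (k - 1) from x (k - 1), x k and \<xi> k.\<close>
lemma errprev_measurable: "errprev G x St k \<in> borel_measurable (F k)"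
proof (cases k)
  case (Suc j)
  have St: "St j \<omega> = (1 / \<eta>) *\<^sub>R (x j \<omega> - x (Suc j) \<omega>) - \<xi> (Suc j) \<omega>" if "\<omega> \<in> space M" for \<omega>
  proof -
    have "\<xi> (Suc j) \<omega> = (1 / \<eta>) *\<^sub>R (x j \<omega> - x (Suc j) \<omega>) - St j \<omega>"
      using xi_Suc[OF that, of j] step_pos by (simp add: scaleR_diff_right)
    then show ?thesis by (simp add: algebra_simps)
  qed
  have "j \<le> Suc j" "j - 1 \<le> Suc j" "Suc j \<le> Suc j" by simp_all
  note [measurable] = measurable_iterates_le[OF this(1)] measurable_iterates_le[OF this(2)]
    measurable_iterates_le[OF this(3)]
  have "(\<lambda>\<omega>. (1 / \<eta>) *\<^sub>R (x j \<omega> - x (Suc j) \<omega>) - \<xi> (Suc j) \<omega>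
      - (2 *\<^sub>R G (x j \<omega>) - G (x (j - 1) \<omega>))) \<in> borel_measurable (F (Suc j))"
    by measurable
  moreover have "space (F (Suc j)) = space M"
    using subalgebra[of "Suc j"] by (simp add: subalgebra_def)
  ultimately have "errk G x St j \<in> borel_measurable (F (Suc j))"
    by (subst measurable_cong) (simp_all add: errk_def Sk_def St)
  then show ?thesis
    using Suc by (simp add: errprev_def[abs_def])
qed (simp add: errprev_def[abs_def])

lemma yk_measurable: "yk G \<eta> x \<xi> k \<in> borel_measurable (F k)"
proof -
  have "k - 1 \<le> k" by simp
  note [measurable] = measurable_iterates_le[OF this] adapted_x adapted_xi
  show ?thesis
    unfolding yk_def[abs_def] by measurable
qed

lemma yprev_measurable: "yprev G \<eta> x \<xi> k \<in> borel_measurable (F k)"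
proof (cases k)
  case 0
  then show ?thesis
    using adapted_x[of 0] by (simp add: yprev_def[abs_def])
next
  case (Suc j)
  then show ?thesis
    using measurable_F_mono[OF yk_measurable, of j k] by (simp add: yprev_def[abs_def])
qed

lemma Qk_measurable: "Qk G \<eta> \<tau> \<gamma> c1 xs x \<xi> St k \<in> borel_measurable (F k)"
proof -
  have "k - 1 \<le> k" by simp
  note [measurable] = measurable_iterates_le[OF this] adapted_x yk_measurable yprev_measurable
    errprev_measurable
  show ?thesis
    unfolding Qk_def[abs_def] by measurable
qed

lemma yk_Suc:
  assumes "\<omega> \<in> space M"
  shows "yk G \<eta> x \<xi> (Suc k) \<omega>
    = yk G \<eta> x \<xi> k \<omega> - \<eta> *\<^sub>R ((G (x k \<omega>) + \<xi> k \<omega>) + errk G x St k \<omega>)"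
proof -
  have "\<eta> *\<^sub>R \<xi> (Suc k) \<omega> = x k \<omega> - \<eta> *\<^sub>R St k \<omega> - x (Suc k) \<omega>"
    using xi_Suc[OF assms, of k] step_pos by simp
  then show ?thesis
    unfolding yk_def errk_def Sk_def scaleR_2 by (simp add: algebra_simps)
qed

lemma Qk_Suc_le:
  assumes \<omega>: "\<omega> \<in> space M"
  shows "Qk G \<eta> \<tau> \<gamma> c1 xs x \<xi> St (Suc k) \<omega>
    \<le> Qk G \<eta> \<tau> \<gamma> c1 xs x \<xi> St k \<omega>
      - (1 - 2 * \<eta> / (c1 * \<tau>) - 4 * \<rho> / \<eta> - 2 / c2
           - 2 * L\<^sup>2 * \<eta> * (c + 4 * \<rho> + 1 / \<gamma> + 2 * \<eta> / c2))
        * (norm (yk G \<eta> x \<xi> k \<omega> - x k \<omega>))\<^sup>2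
      - (1 - \<gamma> * \<eta> - (2 * \<eta> / (c1 * \<tau>)
           + 2 * L\<^sup>2 * \<eta> * (c + 4 * \<rho> + 1 / \<gamma> + 2 * \<eta> / c2)))
        * (norm (yk G \<eta> x \<xi> k \<omega> - x (k - 1) \<omega>))\<^sup>2
      - c * L\<^sup>2 * \<eta> * (norm (x k \<omega> - x (k - 1) \<omega>))\<^sup>2
      + 2 * \<eta> / \<tau> * inner (errk G x St k \<omega>) (xs - yprev G \<eta> x \<xi> k \<omega>)
      - 2 * \<eta> * (1 - \<tau>) / \<tau> * inner (errprev G x St k \<omega>) (xs - yprev G \<eta> x \<xi> k \<omega>)
      + \<eta> * (2 * \<eta> + c1 / \<tau> + c2 * \<eta>) * (norm (errk G x St k \<omega>))\<^sup>2"
proof -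
  define w where "w = G (x k \<omega>) + \<xi> k \<omega>"
  define d where "d = G (x k \<omega>) - G (x (k - 1) \<omega>)"
  have w: "\<eta> *\<^sub>R w = (yk G \<eta> x \<xi> k \<omega> - x k \<omega>) + \<eta> *\<^sub>R d"
    unfolding w_def d_def yk_def by (simp add: algebra_simps)
  have minty: "inner w (x k \<omega> - xs) \<ge> - \<rho> * (norm w)\<^sup>2"
    using weak_minty xi_in_T[OF \<omega>] unfolding w_def weak_minty_def by blast
  have lip: "(norm d)\<^sup>2 \<le> L\<^sup>2 * (norm (x k \<omega> - x (k - 1) \<omega>))\<^sup>2"
    unfolding d_def by (rule G_Lipschitz)
  have \<rho>: "\<rho> \<ge> 0"
    using weak_minty unfolding weak_minty_def by simp
  have "Qk G \<eta> \<tau> \<gamma> c1 xs x \<xi> St (Suc k) \<omega>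
      = (norm (yk G \<eta> x \<xi> k \<omega> - \<eta> *\<^sub>R (w + errk G x St k \<omega>) - xs))\<^sup>2
        + (1 - \<gamma> * \<eta>) * (norm (yk G \<eta> x \<xi> k \<omega> - \<eta> *\<^sub>R (w + errk G x St k \<omega>) - x k \<omega>))\<^sup>2
        + 2 * \<eta> / (c1 * \<tau>) * (norm (x k \<omega> - yk G \<eta> x \<xi> k \<omega>))\<^sup>2
        + 2 * \<eta> * (1 - \<tau>) / \<tau> * inner (errk G x St k \<omega>) (xs - yk G \<eta> x \<xi> k \<omega>)"
    using yk_Suc[OF \<omega>] by (simp add: Qk_def yprev_def errprev_def w_def)
  moreover have "Qk G \<eta> \<tau> \<gamma> c1 xs x \<xi> St k \<omega>
      = (norm (yk G \<eta> x \<xi> k \<omega> - xs))\<^sup>2 + (1 - \<gamma> * \<eta>) * (norm (yk G \<eta> x \<xi> k \<omega> - x (k - 1) \<omega>))\<^sup>2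
        + 2 * \<eta> / (c1 * \<tau>) * (norm (x (k - 1) \<omega> - yprev G \<eta> x \<xi> k \<omega>))\<^sup>2
        + 2 * \<eta> * (1 - \<tau>) / \<tau> * inner (errprev G x St k \<omega>) (xs - yprev G \<eta> x \<xi> k \<omega>)"
    by (simp add: Qk_def)
  ultimately show ?thesis
    using forward_reflected_step_descent[OF step_pos tau_pos constants_pos(3,4,1,2) \<rho> w minty
        lip, where Yp = "yprev G \<eta> x \<xi> k \<omega>" and e = "errk G x St k \<omega>"]
    by linarith
qed

lemma cond_exp_error_terms:
  "AE \<omega> in M. real_cond_exp M (F k) (\<lambda>\<omega>. 2 * \<eta> / \<tau> * inner (errk G x St k \<omega>) (xs - yprev G \<eta> x \<xi> k \<omega>)
       + C * (norm (errk G x St k \<omega>))\<^sup>2) \<omega>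
     = 2 * \<eta> * (1 - \<tau>) / \<tau> * inner (errprev G x St k \<omega>) (xs - yprev G \<eta> x \<xi> k \<omega>)
       + C * real_cond_exp M (F k) (\<lambda>\<omega>. (norm (errk G x St k \<omega>))\<^sup>2) \<omega>"
proof -
  interpret finite_measure_subalgebra M "F k"
    by unfold_locales (rule subalgebra)
  define y' where "y' = yprev G \<eta> x \<xi> k"
  define e where "e = errk G x St k"
  have sq: "square_integrable M e" "square_integrable M (\<lambda>\<omega>. xs - y' \<omega>)"
    unfolding y'_def e_def
    by (intro square_integrable_iterates square_integrable_diff square_integrable_const)+
  have int_inner: "integrable M (\<lambda>\<omega>. inner (e \<omega>) (xs - y' \<omega>))"
    using sq by (rule integrable_inner_square_integrable)
  have int_norm: "integrable M (\<lambda>\<omega>. (norm (e \<omega>))\<^sup>2)"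
    using sq(1) by (rule integrable_norm_sq)
  have "(\<lambda>\<omega>. xs - y' \<omega>) \<in> borel_measurable (F k)"
    using yprev_measurable unfolding y'_def by measurable
  then have "AE \<omega> in M. real_cond_exp M (F k) (\<lambda>\<omega>. inner (e \<omega>) (xs - y' \<omega>)) \<omega>
      = inner ((1 - \<tau>) *\<^sub>R errprev G x St k \<omega>) (xs - y' \<omega>)"
    using error_cond_exp[of k] sq unfolding e_def
    by (intro real_cond_exp_inner_measurable_right) simp_all
  moreover have "AE \<omega> in M. real_cond_exp M (F k) (\<lambda>\<omega>. 2 * \<eta> / \<tau> * inner (e \<omega>) (xs - y' \<omega>)
      + C * (norm (e \<omega>))\<^sup>2) \<omega>
      = real_cond_exp M (F k) (\<lambda>\<omega>. 2 * \<eta> / \<tau> * inner (e \<omega>) (xs - y' \<omega>)) \<omega>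
        + real_cond_exp M (F k) (\<lambda>\<omega>. C * (norm (e \<omega>))\<^sup>2) \<omega>"
    using int_inner int_norm by (intro real_cond_exp_add) auto
  moreover have "AE \<omega> in M. real_cond_exp M (F k) (\<lambda>\<omega>. 2 * \<eta> / \<tau> * inner (e \<omega>) (xs - y' \<omega>)) \<omega>
      = 2 * \<eta> / \<tau> * real_cond_exp M (F k) (\<lambda>\<omega>. inner (e \<omega>) (xs - y' \<omega>)) \<omega>"
    using int_inner by (rule real_cond_exp_cmult)
  moreover have "AE \<omega> in M. real_cond_exp M (F k) (\<lambda>\<omega>. C * (norm (e \<omega>))\<^sup>2) \<omega>
      = C * real_cond_exp M (F k) (\<lambda>\<omega>. (norm (e \<omega>))\<^sup>2) \<omega>"
    using int_norm by (rule real_cond_exp_cmult)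
  ultimately show ?thesis
    unfolding y'_def e_def by eventually_elim simp
qed

lemma Qk_Suc_cond_exp_le:
  "AE \<omega> in M.
     real_cond_exp M (F k) (Qk G \<eta> \<tau> \<gamma> c1 xs x \<xi> St (Suc k)) \<omega>
     \<le> Qk G \<eta> \<tau> \<gamma> c1 xs x \<xi> St k \<omega>
       - (1 - 2 * \<eta> / (c1 * \<tau>) - 4 * \<rho> / \<eta> - 2 / c2
            - 2 * L\<^sup>2 * \<eta> * (c + 4 * \<rho> + 1 / \<gamma> + 2 * \<eta> / c2))
         * (norm (yk G \<eta> x \<xi> k \<omega> - x k \<omega>))\<^sup>2
       - (1 - \<gamma> * \<eta> - (2 * \<eta> / (c1 * \<tau>)
            + 2 * L\<^sup>2 * \<eta> * (c + 4 * \<rho> + 1 / \<gamma> + 2 * \<eta> / c2)))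
         * (norm (yk G \<eta> x \<xi> k \<omega> - x (k - 1) \<omega>))\<^sup>2
       - c * L\<^sup>2 * \<eta> * (norm (x k \<omega> - x (k - 1) \<omega>))\<^sup>2
       + \<eta> * (2 * \<eta> + c1 / \<tau> + c2 * \<eta>)
         * real_cond_exp M (F k) (\<lambda>\<omega>. (norm (errk G x St k \<omega>))\<^sup>2) \<omega>"
  (is "AE \<omega> in M. _ \<le> ?bound \<omega> + ?C * _")
proof -
  interpret finite_measure_subalgebra M "F k"
    by unfold_locales (rule subalgebra)
  define y' where "y' = yprev G \<eta> x \<xi> k"
  define e where "e = errk G x St k"
  define e' where "e' = errprev G x St k"
  define g where "g \<omega> = ?bound \<omega> - 2 * \<eta> * (1 - \<tau>) / \<tau> * inner (e' \<omega>) (xs - y' \<omega>)" for \<omega>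
  define h where "h \<omega> = 2 * \<eta> / \<tau> * inner (e \<omega>) (xs - y' \<omega>) + ?C * (norm (e \<omega>))\<^sup>2" for \<omega>
  have sq: "square_integrable M e" "square_integrable M e'" "square_integrable M (\<lambda>\<omega>. xs - y' \<omega>)"
    unfolding y'_def e_def e'_def
    by (intro square_integrable_iterates square_integrable_diff square_integrable_const)+
  have "AE \<omega> in M. real_cond_exp M (F k) (Qk G \<eta> \<tau> \<gamma> c1 xs x \<xi> St (Suc k)) \<omega>
      \<le> g \<omega> + real_cond_exp M (F k) h \<omega>"
  proof (rule real_cond_exp_le_measurable_add)
    show "Qk G \<eta> \<tau> \<gamma> c1 xs x \<xi> St (Suc k) \<omega> \<le> g \<omega> + h \<omega>" if "\<omega> \<in> space M" for \<omega>
      using Qk_Suc_le[OF that, of k] unfolding g_def h_def y'_def e_def e'_def by linarith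
    show "integrable M g"
      unfolding g_def
      by (intro Bochner_Integration.integrable_diff integrable_mult_right integrable_Qk
          integrable_inner_square_integrable integrable_norm_sq square_integrable_diff
          square_integrable_iterates sq)
    show "integrable M h"
      unfolding h_def
      by (intro Bochner_Integration.integrable_add integrable_mult_right
          integrable_inner_square_integrable integrable_norm_sq sq)
    have "k - 1 \<le> k" by simp
    note [measurable] = measurable_iterates_le[OF this] adapted_x Qk_measurable yk_measurable
      yprev_measurable errprev_measurable
    show "g \<in> borel_measurable (F k)"
      unfolding g_def y'_def e'_def by measurable
  qed (rule integrable_Qk)
  then show ?thesis
    using cond_exp_error_terms[of k ?C] unfolding g_def h_def y'_def e_def e'_def
    by eventually_elim (simp add: Qk_def)
qed

end

theorem mainTheorem10:
  fixes G :: "real^'n \<Rightarrow> real^'n" and T :: "real^'n \<Rightarrow> (real^'n) set"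
    and L \<rho> \<eta> \<tau> \<gamma> c c1 c2 :: real and xs x0 \<xi>0 :: "real^'n"
    and P :: "'z measure" and Gs :: "real^'n \<Rightarrow> 'z \<Rightarrow> real^'n" and \<sigma> :: real
    and n :: nat and Gi :: "nat \<Rightarrow> real^'n \<Rightarrow> real^'n"
    and M :: "'w measure" and F :: "nat \<Rightarrow> 'w measure"
    and x \<xi> St :: "nat \<Rightarrow> 'w \<Rightarrow> real^'n"
  assumes A_bc: "assumptionA_E P Gs G \<sigma> L \<or> assumptionA_F n Gi G L"
    and A_d: "weak_minty G T \<rho> xs"
    and prob: "prob_space M"
    and filt: "filtration (space M) F" and subalg: "\<And>k. subalgebra M (F k)"
    and step: "\<eta> > 0"
    and init_x: "\<And>\<omega>. \<omega> \<in> space M \<Longrightarrow> x 0 \<omega> = x0"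
    and init_xi: "\<And>\<omega>. \<omega> \<in> space M \<Longrightarrow> \<xi> 0 \<omega> = \<xi>0" and xi0_T: "\<xi>0 \<in> T x0"
    and iter: "\<And>k \<omega>. \<omega> \<in> space M \<Longrightarrow> x (Suc k) \<omega> \<in> resolvent \<eta> T (x k \<omega> - \<eta> *\<^sub>R St k \<omega>)"
    and xi_def: "\<And>k \<omega>. \<omega> \<in> space M \<Longrightarrow>
                   \<xi> (Suc k) \<omega> = (1 / \<eta>) *\<^sub>R (x k \<omega> - \<eta> *\<^sub>R St k \<omega> - x (Suc k) \<omega>)"
    and adapt_x: "\<And>k. x k \<in> borel_measurable (F k)"
    and adapt_xi: "\<And>k. \<xi> k \<in> borel_measurable (F k)"
    and meas_St: "\<And>k. St k \<in> borel_measurable M"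
    and int_x: "\<And>k. integrable M (\<lambda>\<omega>. (norm (x k \<omega>))\<^sup>2)"
    and int_xi: "\<And>k. integrable M (\<lambda>\<omega>. (norm (\<xi> k \<omega>))\<^sup>2)"
    and int_St: "\<And>k. integrable M (\<lambda>\<omega>. (norm (St k \<omega>))\<^sup>2)"
    and classB: "classB M F G x St \<tau>"
    and pos: "\<gamma> > 0" "c > 0" "c1 > 0" "c2 > 0"
  shows "(\<forall>k. AE \<omega> in M.
            real_cond_exp M (F k) (Qk G \<eta> \<tau> \<gamma> c1 xs x \<xi> St (Suc k)) \<omega>
            \<le> Qk G \<eta> \<tau> \<gamma> c1 xs x \<xi> St k \<omega>
              - (1 - 2 * \<eta> / (c1 * \<tau>) - 4 * \<rho> / \<eta> - 2 / c2
                   - 2 * L\<^sup>2 * \<eta> * (c + 4 * \<rho> + 1 / \<gamma> + 2 * \<eta> / c2))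
                * (norm (yk G \<eta> x \<xi> k \<omega> - x k \<omega>))\<^sup>2
              - (1 - \<gamma> * \<eta> - (2 * \<eta> / (c1 * \<tau>)
                   + 2 * L\<^sup>2 * \<eta> * (c + 4 * \<rho> + 1 / \<gamma> + 2 * \<eta> / c2)))
                * (norm (yk G \<eta> x \<xi> k \<omega> - x (k - 1) \<omega>))\<^sup>2
              - c * L\<^sup>2 * \<eta> * (norm (x k \<omega> - x (k - 1) \<omega>))\<^sup>2
              + \<eta> * (2 * \<eta> + c1 / \<tau> + c2 * \<eta>)
                * real_cond_exp M (F k) (\<lambda>\<omega>. (norm (errk G x St k \<omega>))\<^sup>2) \<omega>)
       \<and> (\<forall>k. \<forall>\<omega> \<in> space M.
            Qk G \<eta> \<tau> \<gamma> c1 xs x \<xi> St k \<omega>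
            \<ge> 3 / 4 * (norm (yk G \<eta> x \<xi> k \<omega> - xs))\<^sup>2
              + (1 - 2 * \<gamma> * \<eta>) / 2 * (norm (yk G \<eta> x \<xi> k \<omega> - x (k - 1) \<omega>))\<^sup>2
              + (2 * \<eta> / (c1 * \<tau>) - 1 / 2) * (norm (x (k - 1) \<omega> - yprev G \<eta> x \<xi> k \<omega>))\<^sup>2
              - 8 * (1 - \<tau>)\<^sup>2 * \<eta>\<^sup>2 / \<tau>\<^sup>2 * (norm (errprev G x St k \<omega>))\<^sup>2)"
proof -
  have G_Lipschitz: "(norm (G a - G b))\<^sup>2 \<le> L\<^sup>2 * (norm (a - b))\<^sup>2" for a b
    using A_bc assumptionA_E_Lipschitz assumptionA_F_Lipschitz by blast
  have xi_in_T: "\<xi> k \<omega> \<in> T (x k \<omega>)" if \<omega>: "\<omega> \<in> space M" for k \<omega>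
  proof (cases k)
    case 0
    then show ?thesis using init_x init_xi xi0_T \<omega> by simp
  next
    case (Suc j)
    then show ?thesis
      using resolvent_residual_mem[OF iter[OF \<omega>, of j]] xi_def[OF \<omega>, of j] step by simp
  qed
  have tau: "0 < \<tau>" and error_cond_exp: "\<And>k. AE \<omega> in M. \<forall>i.
      real_cond_exp M (F k) (\<lambda>\<omega>. errk G x St k \<omega> $ i) \<omega> = (1 - \<tau>) * (errprev G x St k \<omega> $ i)"
    using classB unfolding classB_def by blast+
  interpret VrFRBS M G T L \<rho> \<eta> \<tau> \<gamma> c c1 c2 xs F x \<xi> St
  proof (rule VrFRBS.intro[OF prob VrFRBS_axioms.intro])
  qed (fact G_Lipschitz A_d filt subalg step tau pos xi_in_T xi_def adapt_x adapt_xi meas_St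
      int_x int_xi int_St error_cond_exp)+
  show ?thesis
    by (intro conjI allI ballI Qk_Suc_cond_exp_le Qk_lower_bound)
qed

end
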